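(* The pair of varieties $(\mathrm{RB}\,\mathrm{As},\mathrm{pre}\,\mathrm{As})$, with the functor $\psi$ described below, is not a PBW-pair.
   Context: $\mathrm{RB}\,\mathrm{As}$ is the variety of associative algebras with a Rota–Baxter operator of weight $0$ (a linear map $R$ with $R(x)R(y)=R(R(x)y+xR(y))$); $\mathrm{pre}\,\mathrm{As}$ is the variety of preassociative algebras (vector spaces with bilinear $\succ,\prec$ satisfying $(x_1\succ x_2+x_1\prec x_2)\succ x_3 = x_1\succ (x_2 \succ x_3)$, $(x_1\succ x_2)\prec x_3=x_1\succ(x_2\prec x_3)$, $x_1\prec(x_2\succ x_3+x_2\prec x_3)=(x_1\prec x_2)\prec x_3$). The functor $\psi:\mathrm{RB}\,\mathrm{As}\to\mathrm{pre}\,\mathrm{As}$ sends an RB-algebra $(B,R)$ to the same space with $x\succ y=R(x)y$, $x\prec y=xR(y)$. Its left adjoint gives the universal enveloping RB-algebra $U(A)$ of a preassociative algebra $A$. A pair of varieties $(\mathcal V,\mathcal W)$ with such a functor $\psi$ (preserving the underlying space and changing operations) is a PBW-pair (in the sense of Mikhalev–Shestakov) if for every $A\in\mathcal W$ the associated graded algebra $\mathrm{gr}\,U(A)$ with respect to the natural ascending filtration of $U(A)$ is isomorphic to $U(\mathrm{Ab}\,A)$, where $\mathrm{Ab}\,A$ denotes the space $A$ with all operations zero. *)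

theory Defs
  imports Main
begin

record ('k, 'a) vsp =
  carr :: "'a set"
  zer  :: 'a
  pls  :: "'a \<Rightarrow> 'a \<Rightarrow> 'a"
  scl  :: "'k \<Rightarrow> 'a \<Rightarrow> 'a"

record ('k, 'a) prealg = "('k, 'a) vsp" +
  succ_op :: "'a \<Rightarrow> 'a \<Rightarrow> 'a"
  prec_op :: "'a \<Rightarrow> 'a \<Rightarrow> 'a"

record ('k, 'a) rbalg = "('k, 'a) vsp" +
  mul :: "'a \<Rightarrow> 'a \<Rightarrow> 'a"
  rbo :: "'a \<Rightarrow> 'a"

definition vspace :: "('k::field, 'a, 'z) vsp_scheme \<Rightarrow> bool" where
  "vspace V \<longleftrightarrow>
     zer V \<in> carr V \<and>
     (\<forall>x\<in>carr V. \<forall>y\<in>carr V. pls V x y \<in> carr V) \<and>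
     (\<forall>c. \<forall>x\<in>carr V. scl V c x \<in> carr V) \<and>
     (\<forall>x\<in>carr V. \<forall>y\<in>carr V. \<forall>z\<in>carr V. pls V (pls V x y) z = pls V x (pls V y z)) \<and>
     (\<forall>x\<in>carr V. \<forall>y\<in>carr V. pls V x y = pls V y x) \<and>
     (\<forall>x\<in>carr V. pls V (zer V) x = x) \<and>
     (\<forall>x\<in>carr V. \<exists>y\<in>carr V. pls V x y = zer V) \<and>
     (\<forall>x\<in>carr V. scl V 1 x = x) \<and>
     (\<forall>a b. \<forall>x\<in>carr V. scl V a (scl V b x) = scl V (a * b) x) \<and>
     (\<forall>a. \<forall>x\<in>carr V. \<forall>y\<in>carr V. scl V a (pls V x y) = pls V (scl V a x) (scl V a y)) \<and>
     (\<forall>a b. \<forall>x\<in>carr V. scl V (a + b) x = pls V (scl V a x) (scl V b x))"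

definition bilinear_on :: "('k::field, 'a, 'z) vsp_scheme \<Rightarrow> ('a \<Rightarrow> 'a \<Rightarrow> 'a) \<Rightarrow> bool" where
  "bilinear_on V f \<longleftrightarrow>
     (\<forall>x\<in>carr V. \<forall>y\<in>carr V. f x y \<in> carr V) \<and>
     (\<forall>x\<in>carr V. \<forall>y\<in>carr V. \<forall>z\<in>carr V. f (pls V x y) z = pls V (f x z) (f y z)) \<and>
     (\<forall>x\<in>carr V. \<forall>y\<in>carr V. \<forall>z\<in>carr V. f z (pls V x y) = pls V (f z x) (f z y)) \<and>
     (\<forall>c. \<forall>x\<in>carr V. \<forall>y\<in>carr V. f (scl V c x) y = scl V c (f x y)) \<and>
     (\<forall>c. \<forall>x\<in>carr V. \<forall>y\<in>carr V. f x (scl V c y) = scl V c (f x y))"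

definition is_preas :: "('k::field, 'a, 'z) prealg_scheme \<Rightarrow> bool" where
  "is_preas A \<longleftrightarrow> vspace A \<and> bilinear_on A (succ_op A) \<and> bilinear_on A (prec_op A) \<and>
    (\<forall>x1\<in>carr A. \<forall>x2\<in>carr A. \<forall>x3\<in>carr A.
       succ_op A (pls A (succ_op A x1 x2) (prec_op A x1 x2)) x3 = succ_op A x1 (succ_op A x2 x3) \<and>
       prec_op A (succ_op A x1 x2) x3 = succ_op A x1 (prec_op A x2 x3) \<and>
       prec_op A x1 (pls A (succ_op A x2 x3) (prec_op A x2 x3)) = prec_op A (prec_op A x1 x2) x3)"

definition is_rbas :: "('k::field, 'a, 'z) rbalg_scheme \<Rightarrow> bool" where
  "is_rbas B \<longleftrightarrow> vspace B \<and> bilinear_on B (mul B) \<and>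
    (\<forall>x\<in>carr B. \<forall>y\<in>carr B. \<forall>z\<in>carr B. mul B (mul B x y) z = mul B x (mul B y z)) \<and>
    (\<forall>x\<in>carr B. rbo B x \<in> carr B) \<and>
    (\<forall>x\<in>carr B. \<forall>y\<in>carr B. rbo B (pls B x y) = pls B (rbo B x) (rbo B y)) \<and>
    (\<forall>c. \<forall>x\<in>carr B. rbo B (scl B c x) = scl B c (rbo B x)) \<and>
    (\<forall>x\<in>carr B. \<forall>y\<in>carr B.
       mul B (rbo B x) (rbo B y) = rbo B (pls B (mul B (rbo B x) y) (mul B x (rbo B y))))"

definition rb_iso :: "('k, 'a) rbalg \<Rightarrow> ('k, 'b) rbalg \<Rightarrow> bool" where
  "rb_iso B C \<longleftrightarrow> (\<exists>\<phi>. bij_betw \<phi> (carr B) (carr C) \<and>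
     (\<forall>x\<in>carr B. \<forall>y\<in>carr B. \<phi> (pls B x y) = pls C (\<phi> x) (\<phi> y)) \<and>
     (\<forall>c. \<forall>x\<in>carr B. \<phi> (scl B c x) = scl C c (\<phi> x)) \<and>
     (\<forall>x\<in>carr B. \<forall>y\<in>carr B. \<phi> (mul B x y) = mul C (\<phi> x) (\<phi> y)) \<and>
     (\<forall>x\<in>carr B. \<phi> (rbo B x) = rbo C (\<phi> x)))"

definition Ab :: "('k, 'a) prealg \<Rightarrow> ('k, 'a) prealg" where
  "Ab A = A\<lparr>succ_op := (\<lambda>x y. zer A), prec_op := (\<lambda>x y. zer A)\<rparr>"

section \<open>Universal enveloping RB-algebra U(A), by generators and relations\<close>

datatype ('k, 'a) tm =
    G 'a | Z | Pl "('k, 'a) tm" "('k, 'a) tm" | Sc 'k "('k, 'a) tm"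
  | Mu "('k, 'a) tm" "('k, 'a) tm" | Rt "('k, 'a) tm"

inductive_set terms :: "('k, 'a) prealg \<Rightarrow> ('k, 'a) tm set" for A where
  "x \<in> carr A \<Longrightarrow> G x \<in> terms A"
| "Z \<in> terms A"
| "s \<in> terms A \<Longrightarrow> t \<in> terms A \<Longrightarrow> Pl s t \<in> terms A"
| "t \<in> terms A \<Longrightarrow> Sc c t \<in> terms A"
| "s \<in> terms A \<Longrightarrow> t \<in> terms A \<Longrightarrow> Mu s t \<in> terms A"
| "t \<in> terms A \<Longrightarrow> Rt t \<in> terms A"

text \<open>The smallest congruence on terms containing the axioms of RB As and the defining
  relations of U(A): the generators form a copy of the space A, and
  R(x)y = x \<succ> y, x R(y) = x \<prec> y for x, y in A.\<close>
inductive_set rbc :: "('k::field, 'a) prealg \<Rightarrow> (('k, 'a) tm \<times> ('k, 'a) tm) set" for A where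
  refl: "t \<in> terms A \<Longrightarrow> (t, t) \<in> rbc A"
| sym: "(s, t) \<in> rbc A \<Longrightarrow> (t, s) \<in> rbc A"
| trans: "(s, t) \<in> rbc A \<Longrightarrow> (t, u) \<in> rbc A \<Longrightarrow> (s, u) \<in> rbc A"
| cPl: "(s, s') \<in> rbc A \<Longrightarrow> (t, t') \<in> rbc A \<Longrightarrow> (Pl s t, Pl s' t') \<in> rbc A"
| cSc: "(s, s') \<in> rbc A \<Longrightarrow> (Sc c s, Sc c s') \<in> rbc A"
| cMu: "(s, s') \<in> rbc A \<Longrightarrow> (t, t') \<in> rbc A \<Longrightarrow> (Mu s t, Mu s' t') \<in> rbc A"
| cRt: "(s, s') \<in> rbc A \<Longrightarrow> (Rt s, Rt s') \<in> rbc A"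
| pl_assoc: "s \<in> terms A \<Longrightarrow> t \<in> terms A \<Longrightarrow> u \<in> terms A \<Longrightarrow> (Pl (Pl s t) u, Pl s (Pl t u)) \<in> rbc A"
| pl_comm: "s \<in> terms A \<Longrightarrow> t \<in> terms A \<Longrightarrow> (Pl s t, Pl t s) \<in> rbc A"
| pl_zero: "t \<in> terms A \<Longrightarrow> (Pl Z t, t) \<in> rbc A"
| pl_neg: "t \<in> terms A \<Longrightarrow> (Pl t (Sc (-1) t), Z) \<in> rbc A"
| sc_one: "t \<in> terms A \<Longrightarrow> (Sc 1 t, t) \<in> rbc A"
| sc_mult: "t \<in> terms A \<Longrightarrow> (Sc a (Sc b t), Sc (a * b) t) \<in> rbc A"
| sc_dist1: "s \<in> terms A \<Longrightarrow> t \<in> terms A \<Longrightarrow> (Sc a (Pl s t), Pl (Sc a s) (Sc a t)) \<in> rbc A"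
| sc_dist2: "t \<in> terms A \<Longrightarrow> (Sc (a + b) t, Pl (Sc a t) (Sc b t)) \<in> rbc A"
| mu_distl: "s \<in> terms A \<Longrightarrow> t \<in> terms A \<Longrightarrow> u \<in> terms A \<Longrightarrow> (Mu (Pl s t) u, Pl (Mu s u) (Mu t u)) \<in> rbc A"
| mu_distr: "s \<in> terms A \<Longrightarrow> t \<in> terms A \<Longrightarrow> u \<in> terms A \<Longrightarrow> (Mu u (Pl s t), Pl (Mu u s) (Mu u t)) \<in> rbc A"
| mu_scl: "s \<in> terms A \<Longrightarrow> t \<in> terms A \<Longrightarrow> (Mu (Sc a s) t, Sc a (Mu s t)) \<in> rbc A"
| mu_scr: "s \<in> terms A \<Longrightarrow> t \<in> terms A \<Longrightarrow> (Mu s (Sc a t), Sc a (Mu s t)) \<in> rbc A"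
| mu_assoc: "s \<in> terms A \<Longrightarrow> t \<in> terms A \<Longrightarrow> u \<in> terms A \<Longrightarrow> (Mu (Mu s t) u, Mu s (Mu t u)) \<in> rbc A"
| rt_pl: "s \<in> terms A \<Longrightarrow> t \<in> terms A \<Longrightarrow> (Rt (Pl s t), Pl (Rt s) (Rt t)) \<in> rbc A"
| rt_sc: "t \<in> terms A \<Longrightarrow> (Rt (Sc a t), Sc a (Rt t)) \<in> rbc A"
| rt_rb: "s \<in> terms A \<Longrightarrow> t \<in> terms A \<Longrightarrow>
           (Mu (Rt s) (Rt t), Rt (Pl (Mu (Rt s) t) (Mu s (Rt t)))) \<in> rbc A"
| g_pl: "x \<in> carr A \<Longrightarrow> y \<in> carr A \<Longrightarrow> (G (pls A x y), Pl (G x) (G y)) \<in> rbc A"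
| g_sc: "x \<in> carr A \<Longrightarrow> (G (scl A c x), Sc c (G x)) \<in> rbc A"
| g_succ: "x \<in> carr A \<Longrightarrow> y \<in> carr A \<Longrightarrow> (Mu (Rt (G x)) (G y), G (succ_op A x y)) \<in> rbc A"
| g_prec: "x \<in> carr A \<Longrightarrow> y \<in> carr A \<Longrightarrow> (Mu (G x) (Rt (G y)), G (prec_op A x y)) \<in> rbc A"

definition rep :: "'x set \<Rightarrow> 'x" where "rep X = (SOME x. x \<in> X)"

definition UE :: "('k::field, 'a) prealg \<Rightarrow> ('k, ('k, 'a) tm set) rbalg" where
  "UE A = \<lparr> carr = terms A // rbc A,
            zer = rbc A `` {Z},
            pls = (\<lambda>X Y. rbc A `` {Pl (rep X) (rep Y)}),
            scl = (\<lambda>c X. rbc A `` {Sc c (rep X)}),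
            mul = (\<lambda>X Y. rbc A `` {Mu (rep X) (rep Y)}),
            rbo = (\<lambda>X. rbc A `` {Rt (rep X)}) \<rparr>"

section \<open>The natural filtration of U(A) and the associated graded algebra\<close>

fun deg :: "('k, 'a) tm \<Rightarrow> nat" where
  "deg (G x) = 1"
| "deg Z = 0"
| "deg (Pl s t) = max (deg s) (deg t)"
| "deg (Sc c t) = deg t"
| "deg (Mu s t) = deg s + deg t"
| "deg (Rt t) = deg t"

text \<open>U_n: the span of RB-monomials of degree at most n in elements of A.\<close>
definition filt :: "('k::field, 'a) prealg \<Rightarrow> nat \<Rightarrow> ('k, 'a) tm set set" where
  "filt A n = {X \<in> carr (UE A). \<exists>t\<in>X. deg t \<le> n}"

text \<open>U_{n-1}, with the convention U_{-1} = 0.\<close>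
definition filt_below :: "('k::field, 'a) prealg \<Rightarrow> nat \<Rightarrow> ('k, 'a) tm set set" where
  "filt_below A n = (if n = 0 then {zer (UE A)} else filt A (n - 1))"

text \<open>An element of gr U(A) = (direct sum over n of U_n / U_{n-1}) is represented by a family
  of terms f n whose class lies in U_n, only finitely many of them not in U_{n-1}.\<close>
definition gr_reps :: "('k::field, 'a) prealg \<Rightarrow> (nat \<Rightarrow> ('k, 'a) tm) set" where
  "gr_reps A = {f. (\<forall>n. f n \<in> terms A \<and> rbc A `` {f n} \<in> filt A n) \<and>
                   finite {n. rbc A `` {f n} \<notin> filt_below A n}}"

definition gr_rel :: "('k::field, 'a) prealg \<Rightarrow> ((nat \<Rightarrow> ('k, 'a) tm) \<times> (nat \<Rightarrow> ('k, 'a) tm)) set" where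
  "gr_rel A = {(f, g). f \<in> gr_reps A \<and> g \<in> gr_reps A \<and>
                 (\<forall>n. rbc A `` {Pl (f n) (Sc (-1) (g n))} \<in> filt_below A n)}"

definition sumt :: "('k, 'a) tm list \<Rightarrow> ('k, 'a) tm" where
  "sumt ts = foldr Pl ts Z"

definition GR :: "('k::field, 'a) prealg \<Rightarrow> ('k, (nat \<Rightarrow> ('k, 'a) tm) set) rbalg" where
  "GR A = \<lparr> carr = gr_reps A // gr_rel A,
            zer = gr_rel A `` {\<lambda>n. Z},
            pls = (\<lambda>X Y. gr_rel A `` {\<lambda>n. Pl (rep X n) (rep Y n)}),
            scl = (\<lambda>c X. gr_rel A `` {\<lambda>n. Sc c (rep X n)}),
            mul = (\<lambda>X Y. gr_rel A `` {\<lambda>n. sumt (map (\<lambda>i. Mu (rep X i) (rep Y (n - i))) [0..<Suc n])}),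
            rbo = (\<lambda>X. gr_rel A `` {\<lambda>n. Rt (rep X n)}) \<rparr>"

text \<open>PBW property of the pair (RB As, pre As) for preassociative algebras whose underlying
  set lives in the type 'a.\<close>
definition PBW_RBAs_preAs :: "('k::field, 'a) prealg itself \<Rightarrow> bool" where
  "PBW_RBAs_preAs _ \<longleftrightarrow> (\<forall>A :: ('k, 'a) prealg. is_preas A \<longrightarrow> rb_iso (GR A) (UE (Ab A)))"

end

theory Submission
  imports Defs
begin

text \<open>Take A = k^\<nat> with x \<succ> y the pointwise product and x \<prec> y = 0. The constant
  sequence 1 satisfies 1 \<succ> y = y and x \<prec> 1 = 0, which forces all products of two
  generators of U(A) to vanish. Now let \<chi> be a homomorphism from gr U(A) to the field with
  zero Rota--Baxter operator. On a generator x of degree one, \<chi>(x)^2 = \<chi>(x x) = 0; every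
  other homogeneous monomial is a product containing a factor of lower degree, lies in the
  image of R, or vanishes in gr U(A). Hence \<chi> = 0. But U(Ab A) does have a nonzero such
  homomorphism, evaluation of the generators at index 0, so gr U(A) and U(Ab A) are not
  isomorphic.\<close>

definition rb_character :: "('k::field, 'a) rbalg \<Rightarrow> ('a \<Rightarrow> 'k) \<Rightarrow> bool" where
  "rb_character B \<chi> \<longleftrightarrow>
     (\<forall>X\<in>carr B. \<forall>Y\<in>carr B. \<chi> (pls B X Y) = \<chi> X + \<chi> Y \<and> \<chi> (mul B X Y) = \<chi> X * \<chi> Y) \<and>
     (\<forall>c. \<forall>X\<in>carr B. \<chi> (scl B c X) = c * \<chi> X) \<and>
     (\<forall>X\<in>carr B. \<chi> (rbo B X) = 0)"

lemma rb_iso_character: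
  assumes iso: "rb_iso B C" and \<chi>: "rb_character C \<chi>"
  obtains \<phi> where "\<phi> ` carr B = carr C" and "rb_character B (\<chi> \<circ> \<phi>)"
proof -
  obtain \<phi> where bij: "bij_betw \<phi> (carr B) (carr C)"
    and "\<forall>x\<in>carr B. \<forall>y\<in>carr B. \<phi> (pls B x y) = pls C (\<phi> x) (\<phi> y)"
    and "\<forall>c. \<forall>x\<in>carr B. \<phi> (scl B c x) = scl C c (\<phi> x)"
    and "\<forall>x\<in>carr B. \<forall>y\<in>carr B. \<phi> (mul B x y) = mul C (\<phi> x) (\<phi> y)"
    and "\<forall>x\<in>carr B. \<phi> (rbo B x) = rbo C (\<phi> x)"
    using iso unfolding rb_iso_def by blast
  moreover have "\<phi> x \<in> carr C" if "x \<in> carr B" for x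
    using bij_betw_apply[OF bij that] .
  ultimately have "rb_character B (\<chi> \<circ> \<phi>)"
    using \<chi> unfolding rb_character_def by simp
  then show thesis using that bij_betw_imp_surj_on[OF bij] by blast
qed

abbreviation neg :: "('k::field, 'a) tm \<Rightarrow> ('k, 'a) tm" where
  "neg t \<equiv> Sc (-1) t"

locale full_carrier =
  fixes A :: "('k::field, 'a) prealg"
  assumes carr_eq_UNIV: "carr A = UNIV"
begin

lemma terms_eq_UNIV[simp]: "terms A = UNIV"
proof -
  have "t \<in> terms A" for t
    by (induction t) (auto intro: terms.intros simp: carr_eq_UNIV)
  then show ?thesis by blast
qed

definition tm_cong :: "('k, 'a) tm \<Rightarrow> ('k, 'a) tm \<Rightarrow> bool" (infix "\<approx>" 50) where
  "s \<approx> t \<longleftrightarrow> (s, t) \<in> rbc A"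

lemma cong_refl[simp]: "t \<approx> t" unfolding tm_cong_def by (rule rbc.refl) simp
lemma cong_sym: "s \<approx> t \<Longrightarrow> t \<approx> s" unfolding tm_cong_def by (rule rbc.sym)
lemma cong_trans[trans]: "s \<approx> t \<Longrightarrow> t \<approx> u \<Longrightarrow> s \<approx> u" unfolding tm_cong_def by (rule rbc.trans)
lemma cong_Pl: "s \<approx> s' \<Longrightarrow> t \<approx> t' \<Longrightarrow> Pl s t \<approx> Pl s' t'" unfolding tm_cong_def by (rule rbc.cPl)
lemma cong_Sc: "s \<approx> s' \<Longrightarrow> Sc c s \<approx> Sc c s'" unfolding tm_cong_def by (rule rbc.cSc)
lemma cong_Mu: "s \<approx> s' \<Longrightarrow> t \<approx> t' \<Longrightarrow> Mu s t \<approx> Mu s' t'" unfolding tm_cong_def by (rule rbc.cMu)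
lemma cong_Rt: "s \<approx> s' \<Longrightarrow> Rt s \<approx> Rt s'" unfolding tm_cong_def by (rule rbc.cRt)

lemma cong_pl_assoc: "Pl (Pl s t) u \<approx> Pl s (Pl t u)" unfolding tm_cong_def by (rule rbc.pl_assoc) simp_all
lemma cong_pl_comm: "Pl s t \<approx> Pl t s" unfolding tm_cong_def by (rule rbc.pl_comm) simp_all
lemma cong_pl_zero: "Pl Z t \<approx> t" unfolding tm_cong_def by (rule rbc.pl_zero) simp
lemma cong_pl_neg: "Pl t (neg t) \<approx> Z" unfolding tm_cong_def by (rule rbc.pl_neg) simp
lemma cong_sc_one: "Sc 1 t \<approx> t" unfolding tm_cong_def by (rule rbc.sc_one) simp
lemma cong_sc_mult: "Sc a (Sc b t) \<approx> Sc (a * b) t" unfolding tm_cong_def by (rule rbc.sc_mult) simp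
lemma cong_sc_dist1: "Sc a (Pl s t) \<approx> Pl (Sc a s) (Sc a t)" unfolding tm_cong_def by (rule rbc.sc_dist1) simp_all
lemma cong_sc_dist2: "Sc (a + b) t \<approx> Pl (Sc a t) (Sc b t)" unfolding tm_cong_def by (rule rbc.sc_dist2) simp
lemma cong_mu_distl: "Mu (Pl s t) u \<approx> Pl (Mu s u) (Mu t u)" unfolding tm_cong_def by (rule rbc.mu_distl) simp_all
lemma cong_mu_distr: "Mu u (Pl s t) \<approx> Pl (Mu u s) (Mu u t)" unfolding tm_cong_def by (rule rbc.mu_distr) simp_all
lemma cong_mu_scl: "Mu (Sc a s) t \<approx> Sc a (Mu s t)" unfolding tm_cong_def by (rule rbc.mu_scl) simp_all
lemma cong_mu_scr: "Mu s (Sc a t) \<approx> Sc a (Mu s t)" unfolding tm_cong_def by (rule rbc.mu_scr) simp_all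
lemma cong_mu_assoc: "Mu (Mu s t) u \<approx> Mu s (Mu t u)" unfolding tm_cong_def by (rule rbc.mu_assoc) simp_all
lemma cong_rt_pl: "Rt (Pl s t) \<approx> Pl (Rt s) (Rt t)" unfolding tm_cong_def by (rule rbc.rt_pl) simp_all
lemma cong_rt_sc: "Rt (Sc a t) \<approx> Sc a (Rt t)" unfolding tm_cong_def by (rule rbc.rt_sc) simp
lemma cong_g_sc: "G (scl A c x) \<approx> Sc c (G x)"
  unfolding tm_cong_def by (rule rbc.g_sc) (simp add: carr_eq_UNIV)
lemma cong_g_succ: "Mu (Rt (G x)) (G y) \<approx> G (succ_op A x y)"
  unfolding tm_cong_def by (rule rbc.g_succ) (simp_all add: carr_eq_UNIV)
lemma cong_g_prec: "Mu (G x) (Rt (G y)) \<approx> G (prec_op A x y)"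
  unfolding tm_cong_def by (rule rbc.g_prec) (simp_all add: carr_eq_UNIV)

lemma cong_pl_zero_right: "Pl t Z \<approx> t"
  using cong_trans[OF cong_pl_comm cong_pl_zero] .

lemma cong_Z_if_double: assumes "Pl x x \<approx> x" shows "x \<approx> Z"
proof -
  have "x \<approx> Pl x Z" by (rule cong_sym[OF cong_pl_zero_right])
  also have "\<dots> \<approx> Pl x (Pl x (neg x))" by (rule cong_Pl[OF cong_refl cong_sym[OF cong_pl_neg]])
  also have "\<dots> \<approx> Pl (Pl x x) (neg x)" by (rule cong_sym[OF cong_pl_assoc])
  also have "\<dots> \<approx> Pl x (neg x)" by (rule cong_Pl[OF assms cong_refl])
  also have "\<dots> \<approx> Z" by (rule cong_pl_neg)
  finally show ?thesis .
qed

lemma cong_Sc_Z: "Sc c Z \<approx> Z"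
  by (rule cong_Z_if_double, rule cong_trans[OF cong_sym[OF cong_sc_dist1] cong_Sc[OF cong_pl_zero]])

lemma cong_Mu_Z_left: "Mu Z t \<approx> Z"
  by (rule cong_Z_if_double, rule cong_trans[OF cong_sym[OF cong_mu_distl] cong_Mu[OF cong_pl_zero cong_refl]])

lemma cong_Mu_Z_right: "Mu t Z \<approx> Z"
  by (rule cong_Z_if_double, rule cong_trans[OF cong_sym[OF cong_mu_distr] cong_Mu[OF cong_refl cong_pl_zero]])

lemma cong_Rt_Z: "Rt Z \<approx> Z"
  by (rule cong_Z_if_double, rule cong_trans[OF cong_sym[OF cong_rt_pl] cong_Rt[OF cong_pl_zero]])

lemma cong_Sc_0: "Sc 0 t \<approx> Z"
  by (rule cong_Z_if_double) (use cong_sym[OF cong_sc_dist2[where a = 0 and b = 0]] in simp)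

lemma cong_pl_neg_left: "Pl (neg q) q \<approx> Z"
  using cong_trans[OF cong_pl_comm cong_pl_neg] .

lemma cong_diff_trans: "Pl (Pl p (neg q)) (Pl q (neg r)) \<approx> Pl p (neg r)"
proof -
  have "Pl (Pl p (neg q)) (Pl q (neg r)) \<approx> Pl p (Pl (neg q) (Pl q (neg r)))" by (rule cong_pl_assoc)
  also have "\<dots> \<approx> Pl p (Pl (Pl (neg q) q) (neg r))" by (rule cong_Pl[OF cong_refl cong_sym[OF cong_pl_assoc]])
  also have "\<dots> \<approx> Pl p (Pl Z (neg r))" by (rule cong_Pl[OF cong_refl cong_Pl[OF cong_pl_neg_left cong_refl]])
  also have "\<dots> \<approx> Pl p (neg r)" by (rule cong_Pl[OF cong_refl cong_pl_zero])
  finally show ?thesis .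
qed

lemma cong_diff_add: "Pl (Pl p (neg q)) q \<approx> p"
proof -
  have "Pl (Pl p (neg q)) q \<approx> Pl p (Pl (neg q) q)" by (rule cong_pl_assoc)
  also have "\<dots> \<approx> Pl p Z" by (rule cong_Pl[OF cong_refl cong_pl_neg_left])
  also have "\<dots> \<approx> p" by (rule cong_pl_zero_right)
  finally show ?thesis .
qed

lemma cong_neg_diff: "neg (Pl p (neg q)) \<approx> Pl q (neg p)"
proof -
  have "neg (Pl p (neg q)) \<approx> Pl (neg p) (neg (neg q))" by (rule cong_sc_dist1)
  also have "\<dots> \<approx> Pl (neg p) (Sc ((-1) * (-1)) q)" by (rule cong_Pl[OF cong_refl cong_sc_mult])
  also have "Sc ((-1) * (-1)) q = Sc 1 q" by simp
  also have "Pl (neg p) (Sc 1 q) \<approx> Pl (neg p) q" by (rule cong_Pl[OF cong_refl cong_sc_one])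
  also have "\<dots> \<approx> Pl q (neg p)" by (rule cong_pl_comm)
  finally show ?thesis .
qed

lemma cong_Sc_diff: "Pl (Sc c p) (neg (Sc c q)) \<approx> Sc c (Pl p (neg q))"
proof -
  have "Sc c (Pl p (neg q)) \<approx> Pl (Sc c p) (Sc c (neg q))" by (rule cong_sc_dist1)
  also have "\<dots> \<approx> Pl (Sc c p) (Sc (c * -1) q)" by (rule cong_Pl[OF cong_refl cong_sc_mult])
  also have "Sc (c * -1) q = Sc (-1 * c) q" by simp
  also have "Pl (Sc c p) (Sc (-1 * c) q) \<approx> Pl (Sc c p) (neg (Sc c q))"
    by (rule cong_Pl[OF cong_refl cong_sym[OF cong_sc_mult]])
  finally show ?thesis by (rule cong_sym)
qed

lemma cong_Rt_diff: "Pl (Rt p) (neg (Rt q)) \<approx> Rt (Pl p (neg q))"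
  by (rule cong_sym, rule cong_trans[OF cong_rt_pl cong_Pl[OF cong_refl cong_rt_sc]])

lemma cong_Pl_diff: "Pl (Pl p q) (neg (Pl p' q')) \<approx> Pl (Pl p (neg p')) (Pl q (neg q'))"
proof -
  have "Pl (Pl p q) (neg (Pl p' q')) \<approx> Pl (Pl p q) (Pl (neg p') (neg q'))"
    by (rule cong_Pl[OF cong_refl cong_sc_dist1])
  also have "\<dots> \<approx> Pl p (Pl q (Pl (neg p') (neg q')))" by (rule cong_pl_assoc)
  also have "\<dots> \<approx> Pl p (Pl (Pl q (neg p')) (neg q'))" by (rule cong_Pl[OF cong_refl cong_sym[OF cong_pl_assoc]])
  also have "\<dots> \<approx> Pl p (Pl (Pl (neg p') q) (neg q'))"
    by (rule cong_Pl[OF cong_refl cong_Pl[OF cong_pl_comm cong_refl]])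
  also have "\<dots> \<approx> Pl p (Pl (neg p') (Pl q (neg q')))" by (rule cong_Pl[OF cong_refl cong_pl_assoc])
  also have "\<dots> \<approx> Pl (Pl p (neg p')) (Pl q (neg q'))" by (rule cong_sym[OF cong_pl_assoc])
  finally show ?thesis .
qed

lemma cong_Mu_diff: "Pl (Mu p q) (neg (Mu p' q')) \<approx> Pl (Mu (Pl p (neg p')) q) (Mu p' (Pl q (neg q')))"
proof -
  have left: "Mu (Pl p (neg p')) q \<approx> Pl (Mu p q) (neg (Mu p' q))"
    by (rule cong_trans[OF cong_mu_distl cong_Pl[OF cong_refl cong_mu_scl]])
  have right: "Mu p' (Pl q (neg q')) \<approx> Pl (Mu p' q) (neg (Mu p' q'))"
    by (rule cong_trans[OF cong_mu_distr cong_Pl[OF cong_refl cong_mu_scr]])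
  have "Pl (Mu (Pl p (neg p')) q) (Mu p' (Pl q (neg q')))
          \<approx> Pl (Pl (Mu p q) (neg (Mu p' q))) (Pl (Mu p' q) (neg (Mu p' q')))"
    by (rule cong_Pl[OF left right])
  also have "\<dots> \<approx> Pl (Mu p q) (neg (Mu p' q'))" by (rule cong_diff_trans)
  finally show ?thesis by (rule cong_sym)
qed

text \<open>A left unit for \<succ> that is annihilated by \<prec> forces x y = x (R(u) y) = (x \<prec> u) y = 0.\<close>

lemma cong_Mu_G_G_Z:
  assumes "succ_op A u y = y" and "prec_op A x u = scl A 0 x"
  shows "Mu (G x) (G y) \<approx> Z"
proof -
  have "Mu (G x) (G y) \<approx> Mu (G x) (Mu (Rt (G u)) (G y))"
    using cong_Mu[OF cong_refl cong_sym[OF cong_g_succ[of u y]]] assms(1) by simp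
  also have "\<dots> \<approx> Mu (Mu (G x) (Rt (G u))) (G y)" by (rule cong_sym[OF cong_mu_assoc])
  also have "\<dots> \<approx> Mu (G (scl A 0 x)) (G y)" using cong_Mu[OF cong_g_prec[of x u] cong_refl] assms(2) by simp
  also have "\<dots> \<approx> Mu (Sc 0 (G x)) (G y)" by (rule cong_Mu[OF cong_g_sc cong_refl])
  also have "\<dots> \<approx> Mu Z (G y)" by (rule cong_Mu[OF cong_Sc_0 cong_refl])
  also have "\<dots> \<approx> Z" by (rule cong_Mu_Z_left)
  finally show ?thesis .
qed

text \<open>The class of t lies in U_n, resp. in U_(n-1); and p, q are congruent modulo U_(n-1).\<close>

definition filtered :: "nat \<Rightarrow> ('k, 'a) tm \<Rightarrow> bool" where
  "filtered n t \<longleftrightarrow> (\<exists>t'. t \<approx> t' \<and> deg t' \<le> n)"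

definition filtered_below :: "nat \<Rightarrow> ('k, 'a) tm \<Rightarrow> bool" where
  "filtered_below n t \<longleftrightarrow> (if n = 0 then t \<approx> Z else filtered (n - 1) t)"

definition cong_below :: "nat \<Rightarrow> ('k, 'a) tm \<Rightarrow> ('k, 'a) tm \<Rightarrow> bool" where
  "cong_below n p q \<longleftrightarrow> filtered_below n (Pl p (neg q))"

lemma filtered_cong: "filtered n t \<Longrightarrow> t \<approx> t' \<Longrightarrow> filtered n t'"
  unfolding filtered_def by (meson cong_sym cong_trans)

lemma filtered_below_cong: "filtered_below n t \<Longrightarrow> t \<approx> t' \<Longrightarrow> filtered_below n t'"
  unfolding filtered_below_def by (metis cong_sym cong_trans filtered_cong)

lemma filtered_deg: "deg t \<le> n \<Longrightarrow> filtered n t"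
  unfolding filtered_def using cong_refl by blast

lemma filtered_mono: "filtered m t \<Longrightarrow> m \<le> n \<Longrightarrow> filtered n t"
  unfolding filtered_def by (meson order_trans)

lemma filtered_Z: "filtered n Z"
  by (rule filtered_deg) simp

lemma filtered_Pl: "filtered n p \<Longrightarrow> filtered n q \<Longrightarrow> filtered n (Pl p q)"
  unfolding filtered_def by (force intro: cong_Pl)

lemma filtered_Sc: "filtered n p \<Longrightarrow> filtered n (Sc c p)"
  unfolding filtered_def by (force intro: cong_Sc)

lemma filtered_Rt: "filtered n p \<Longrightarrow> filtered n (Rt p)"
  unfolding filtered_def by (force intro: cong_Rt)

lemma filtered_Mu: "filtered a p \<Longrightarrow> filtered b q \<Longrightarrow> filtered (a + b) (Mu p q)"
  unfolding filtered_def by (force intro: cong_Mu add_mono)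

lemma filtered_below_if_cong_Z: "t \<approx> Z \<Longrightarrow> filtered_below n t"
  unfolding filtered_below_def using filtered_cong[OF filtered_Z cong_sym] by auto

lemma filtered_below_Z: "filtered_below n Z"
  by (rule filtered_below_if_cong_Z) simp

lemma filtered_below_imp_filtered: "filtered_below n t \<Longrightarrow> filtered n t"
  unfolding filtered_below_def
  by (auto split: if_splits intro: filtered_mono filtered_cong[OF filtered_Z] cong_sym)

lemma filtered_below_Pl: "filtered_below n p \<Longrightarrow> filtered_below n q \<Longrightarrow> filtered_below n (Pl p q)"
  unfolding filtered_below_def
  by (auto split: if_splits intro: filtered_Pl cong_trans[OF cong_Pl cong_pl_zero])

lemma filtered_below_Sc: "filtered_below n p \<Longrightarrow> filtered_below n (Sc c p)"
  unfolding filtered_below_def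
  by (auto split: if_splits intro: filtered_Sc cong_trans[OF cong_Sc cong_Sc_Z])

lemma filtered_below_Rt: "filtered_below n p \<Longrightarrow> filtered_below n (Rt p)"
  unfolding filtered_below_def
  by (auto split: if_splits intro: filtered_Rt cong_trans[OF cong_Rt cong_Rt_Z])

lemma filtered_below_Mu_left:
  assumes p: "filtered_below a p" and q: "filtered b q"
  shows "filtered_below (a + b) (Mu p q)"
proof (cases "a = 0")
  case True
  then have "p \<approx> Z" using p by (simp add: filtered_below_def)
  then show ?thesis by (intro filtered_below_if_cong_Z cong_trans[OF cong_Mu[OF _ cong_refl] cong_Mu_Z_left])
next
  case False
  then have "filtered (a - 1 + b) (Mu p q)"
    using p q filtered_Mu[of "a - 1" p b q] by (simp add: filtered_below_def)
  then show ?thesis using False by (simp add: filtered_below_def)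
qed

lemma filtered_below_Mu_right:
  assumes p: "filtered a p" and q: "filtered_below b q"
  shows "filtered_below (a + b) (Mu p q)"
proof (cases "b = 0")
  case True
  then have "q \<approx> Z" using q by (simp add: filtered_below_def)
  then show ?thesis by (intro filtered_below_if_cong_Z cong_trans[OF cong_Mu[OF cong_refl] cong_Mu_Z_right])
next
  case False
  then have "filtered (a + (b - 1)) (Mu p q)"
    using p q filtered_Mu[of a p "b - 1" q] by (simp add: filtered_below_def)
  then show ?thesis using False by (simp add: filtered_below_def)
qed

lemma cong_below_refl: "cong_below n p p"
  unfolding cong_below_def by (rule filtered_below_if_cong_Z[OF cong_pl_neg])

lemma cong_below_if_cong: "p \<approx> q \<Longrightarrow> cong_below n p q"
  unfolding cong_below_def
  by (rule filtered_below_if_cong_Z[OF cong_trans[OF cong_Pl[OF _ cong_refl] cong_pl_neg]])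

lemma cong_below_sym: "cong_below n p q \<Longrightarrow> cong_below n q p"
  unfolding cong_below_def by (rule filtered_below_cong[OF filtered_below_Sc cong_neg_diff])

lemma cong_below_trans: "cong_below n p q \<Longrightarrow> cong_below n q r \<Longrightarrow> cong_below n p r"
  unfolding cong_below_def by (rule filtered_below_cong[OF filtered_below_Pl cong_diff_trans])

lemma cong_below_Pl: "cong_below n p p' \<Longrightarrow> cong_below n q q' \<Longrightarrow> cong_below n (Pl p q) (Pl p' q')"
  unfolding cong_below_def by (rule filtered_below_cong[OF filtered_below_Pl cong_sym[OF cong_Pl_diff]])

lemma cong_below_Sc: "cong_below n p p' \<Longrightarrow> cong_below n (Sc c p) (Sc c p')"
  unfolding cong_below_def by (rule filtered_below_cong[OF filtered_below_Sc cong_sym[OF cong_Sc_diff]])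

lemma cong_below_Rt: "cong_below n p p' \<Longrightarrow> cong_below n (Rt p) (Rt p')"
  unfolding cong_below_def by (rule filtered_below_cong[OF filtered_below_Rt cong_sym[OF cong_Rt_diff]])

lemma cong_below_Mu:
  "cong_below a p p' \<Longrightarrow> filtered b q \<Longrightarrow> filtered a p' \<Longrightarrow> cong_below b q q' \<Longrightarrow>
   cong_below (a + b) (Mu p q) (Mu p' q')"
  unfolding cong_below_def
  by (rule filtered_below_cong[OF filtered_below_Pl[OF filtered_below_Mu_left filtered_below_Mu_right]
        cong_sym[OF cong_Mu_diff]])

lemma filtered_if_cong_below: "cong_below n p q \<Longrightarrow> filtered n q \<Longrightarrow> filtered n p"
  unfolding cong_below_def
  by (rule filtered_cong[OF filtered_Pl[OF filtered_below_imp_filtered] cong_diff_add])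

lemma filtered_below_if_cong_below: "cong_below n p q \<Longrightarrow> filtered_below n q \<Longrightarrow> filtered_below n p"
  unfolding cong_below_def by (rule filtered_below_cong[OF filtered_below_Pl cong_diff_add])

lemma cong_below_if_cong_Z: "p \<approx> Z \<Longrightarrow> filtered_below n q \<Longrightarrow> cong_below n p q"
  unfolding cong_below_def by (rule filtered_below_Pl[OF filtered_below_if_cong_Z filtered_below_Sc])

lemma equiv_rbc: "equiv UNIV (rbc A)"
  by (rule equivI) (auto simp: refl_on_def sym_def trans_def tm_cong_def[symmetric] intro: cong_sym cong_trans)

lemma rbc_class_eq_iff: "rbc A `` {s} = rbc A `` {t} \<longleftrightarrow> s \<approx> t"
  using eq_equiv_class_iff[OF equiv_rbc] by (simp add: tm_cong_def)

lemma rbc_class_in_UE: "rbc A `` {t} \<in> carr (UE A)"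
  by (simp add: UE_def quotientI)

lemma rbc_class_in_filt_iff: "rbc A `` {t} \<in> filt A n \<longleftrightarrow> filtered n t"
  unfolding filt_def filtered_def using rbc_class_in_UE by (auto simp: tm_cong_def)

lemma rbc_class_in_filt_below_iff: "rbc A `` {t} \<in> filt_below A n \<longleftrightarrow> filtered_below n t"
  unfolding filt_below_def filtered_below_def
  by (simp add: rbc_class_in_filt_iff UE_def rbc_class_eq_iff)

lemma gr_reps_iff: "f \<in> gr_reps A \<longleftrightarrow> (\<forall>n. filtered n (f n)) \<and> finite {n. \<not> filtered_below n (f n)}"
  unfolding gr_reps_def by (simp add: rbc_class_in_filt_iff rbc_class_in_filt_below_iff)

lemma gr_rel_iff:
  "(f, g) \<in> gr_rel A \<longleftrightarrow> f \<in> gr_reps A \<and> g \<in> gr_reps A \<and> (\<forall>n. cong_below n (f n) (g n))"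
  unfolding gr_rel_def by (simp add: rbc_class_in_filt_below_iff cong_below_def)

lemma equiv_gr_rel: "equiv (gr_reps A) (gr_rel A)"
  by (rule equivI)
    (auto simp: refl_on_def sym_def trans_def gr_rel_iff intro: cong_below_refl cong_below_sym cong_below_trans)

abbreviation gr_class :: "(nat \<Rightarrow> ('k, 'a) tm) \<Rightarrow> (nat \<Rightarrow> ('k, 'a) tm) set" where
  "gr_class f \<equiv> gr_rel A `` {f}"

lemma gr_class_in_GR: "f \<in> gr_reps A \<Longrightarrow> gr_class f \<in> carr (GR A)"
  by (simp add: GR_def quotientI)

lemma gr_class_eq: "(f, g) \<in> gr_rel A \<Longrightarrow> gr_class f = gr_class g"
  by (rule equiv_class_eq[OF equiv_gr_rel])

lemma gr_rel_rep: assumes "f \<in> gr_reps A" shows "(f, rep (gr_class f)) \<in> gr_rel A"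
proof -
  have "f \<in> gr_class f" using assms by (simp add: gr_rel_iff cong_below_refl)
  then have "rep (gr_class f) \<in> gr_class f"
    unfolding rep_def by (rule someI[of "\<lambda>x. x \<in> gr_class f"])
  then show ?thesis by simp
qed

lemma rep_gr_class_reps: "f \<in> gr_reps A \<Longrightarrow> rep (gr_class f) \<in> gr_reps A"
  using gr_rel_rep[of f] by (simp add: gr_rel_iff)

lemma cong_below_rep_gr_class: "f \<in> gr_reps A \<Longrightarrow> cong_below n (rep (gr_class f) n) (f n)"
  using gr_rel_rep[of f] by (simp add: gr_rel_iff cong_below_sym)

lemma gr_relI:
  assumes h: "h \<in> gr_reps A" and ph: "\<And>m. cong_below m (p m) (h m)"
  shows "(p, h) \<in> gr_rel A"
proof -
  have "filtered m (p m)" for m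
    using h ph by (meson filtered_if_cong_below gr_reps_iff)
  moreover have "{n. \<not> filtered_below n (p n)} \<subseteq> {n. \<not> filtered_below n (h n)}"
    using ph filtered_below_if_cong_below by blast
  then have "finite {n. \<not> filtered_below n (p n)}"
    using h finite_subset gr_reps_iff by blast
  ultimately show ?thesis using h ph by (simp add: gr_rel_iff gr_reps_iff)
qed

lemma pls_GR_class:
  assumes "f \<in> gr_reps A" "g \<in> gr_reps A" "h \<in> gr_reps A" "\<And>m. cong_below m (Pl (f m) (g m)) (h m)"
  shows "pls (GR A) (gr_class f) (gr_class g) = gr_class h"
proof -
  let ?f = "rep (gr_class f)" and ?g = "rep (gr_class g)"
  have "cong_below m (Pl (?f m) (?g m)) (h m)" for m
    using cong_below_trans[OF cong_below_Pl[OF cong_below_rep_gr_class cong_below_rep_gr_class] assms(4)]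
      assms(1,2) .
  then have "(\<lambda>m. Pl (?f m) (?g m), h) \<in> gr_rel A" by (rule gr_relI[OF assms(3)])
  then show ?thesis by (simp add: GR_def gr_class_eq)
qed

lemma scl_GR_class:
  assumes "f \<in> gr_reps A" "h \<in> gr_reps A" "\<And>m. cong_below m (Sc c (f m)) (h m)"
  shows "scl (GR A) c (gr_class f) = gr_class h"
proof -
  let ?f = "rep (gr_class f)"
  have "cong_below m (Sc c (?f m)) (h m)" for m
    using cong_below_trans[OF cong_below_Sc[OF cong_below_rep_gr_class[OF assms(1)]] assms(3)] .
  then have "(\<lambda>m. Sc c (?f m), h) \<in> gr_rel A" by (rule gr_relI[OF assms(2)])
  then show ?thesis by (simp add: GR_def gr_class_eq)
qed

lemma rbo_GR_class:
  assumes "f \<in> gr_reps A" "h \<in> gr_reps A" "\<And>m. cong_below m (Rt (f m)) (h m)"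
  shows "rbo (GR A) (gr_class f) = gr_class h"
proof -
  let ?f = "rep (gr_class f)"
  have "cong_below m (Rt (?f m)) (h m)" for m
    using cong_below_trans[OF cong_below_Rt[OF cong_below_rep_gr_class[OF assms(1)]] assms(3)] .
  then have "(\<lambda>m. Rt (?f m), h) \<in> gr_rel A" by (rule gr_relI[OF assms(2)])
  then show ?thesis by (simp add: GR_def gr_class_eq)
qed

definition homog :: "nat \<Rightarrow> ('k, 'a) tm \<Rightarrow> nat \<Rightarrow> ('k, 'a) tm" where
  "homog n t = (\<lambda>m. if m = n then t else Z)"

lemma homog_in_gr_reps: assumes "filtered n t" shows "homog n t \<in> gr_reps A"
proof -
  have "{m. \<not> filtered_below m (homog n t m)} \<subseteq> {n}"
    by (auto simp: homog_def filtered_below_Z)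
  then have "finite {m. \<not> filtered_below m (homog n t m)}" by (rule finite_subset) simp
  then show ?thesis using assms by (simp add: gr_reps_iff homog_def filtered_Z)
qed

lemma cong_below_sumt:
  "(\<And>k. k \<in> set ks \<Longrightarrow> cong_below m (a k) (b k)) \<Longrightarrow>
   cong_below m (sumt (map a ks)) (sumt (map b ks))"
  by (induction ks) (auto simp: sumt_def cong_below_refl intro: cong_below_Pl)

lemma cong_sumt_single:
  "distinct ks \<Longrightarrow> (\<And>k. k \<in> set ks \<Longrightarrow> k \<noteq> i \<Longrightarrow> h k \<approx> Z) \<Longrightarrow>
   sumt (map h ks) \<approx> (if i \<in> set ks then h i else Z)"
proof (induction ks)
  case Nil
  then show ?case by (simp add: sumt_def)
next
  case (Cons k ks)
  then have IH: "sumt (map h ks) \<approx> (if i \<in> set ks then h i else Z)" by auto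
  show ?case
  proof (cases "k = i")
    case True
    then have "i \<notin> set ks" using Cons by auto
    then have "sumt (map h (k # ks)) \<approx> Pl (h i) Z" using IH True by (simp add: sumt_def cong_Pl)
    then show ?thesis using True cong_trans[OF _ cong_pl_zero_right] by simp
  next
    case False
    then have "sumt (map h (k # ks)) \<approx> Pl Z (if i \<in> set ks then h i else Z)"
      using Cons IH by (simp add: sumt_def cong_Pl)
    then show ?thesis using False cong_trans[OF _ cong_pl_zero] by simp
  qed
qed

lemma mul_GR_homog:
  assumes s: "filtered i s" and u: "filtered j u"
  shows "mul (GR A) (gr_class (homog i s)) (gr_class (homog j u)) = gr_class (homog (i + j) (Mu s u))"
proof -
  let ?f = "rep (gr_class (homog i s))" and ?g = "rep (gr_class (homog j u))"
  have fi: "homog i s \<in> gr_reps A" and gj: "homog j u \<in> gr_reps A"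
    using s u by (simp_all add: homog_in_gr_reps)
  have "cong_below m (sumt (map (\<lambda>k. Mu (?f k) (?g (m - k))) [0..<Suc m])) (homog (i + j) (Mu s u) m)"
    for m
  proof -
    have "cong_below m (sumt (map (\<lambda>k. Mu (?f k) (?g (m - k))) [0..<Suc m]))
            (sumt (map (\<lambda>k. Mu (homog i s k) (homog j u (m - k))) [0..<Suc m]))"
    proof (rule cong_below_sumt)
      fix k assume "k \<in> set [0..<Suc m]"
      then have km: "k + (m - k) = m" by auto
      have "cong_below (k + (m - k)) (Mu (?f k) (?g (m - k))) (Mu (homog i s k) (homog j u (m - k)))"
        using cong_below_rep_gr_class[OF fi] cong_below_rep_gr_class[OF gj] rep_gr_class_reps[OF gj] fi
        by (intro cong_below_Mu) (auto simp: gr_reps_iff)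
      then show "cong_below m (Mu (?f k) (?g (m - k))) (Mu (homog i s k) (homog j u (m - k)))"
        using km by simp
    qed
    moreover have "sumt (map (\<lambda>k. Mu (homog i s k) (homog j u (m - k))) [0..<Suc m])
                     \<approx> (if i \<in> set [0..<Suc m] then Mu (homog i s i) (homog j u (m - i)) else Z)"
      by (rule cong_sumt_single) (auto simp: homog_def cong_Mu_Z_left)
    moreover have "(if i \<in> set [0..<Suc m] then Mu (homog i s i) (homog j u (m - i)) else Z)
                     \<approx> homog (i + j) (Mu s u) m"
      by (auto simp: homog_def cong_Mu_Z_right)
    ultimately show ?thesis by (meson cong_below_trans cong_below_if_cong cong_trans)
  qed
  then have "((\<lambda>m. sumt (map (\<lambda>k. Mu (?f k) (?g (m - k))) [0..<Suc m])), homog (i + j) (Mu s u)) \<in> gr_rel A"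
    by (rule gr_relI[OF homog_in_gr_reps[OF filtered_Mu[OF s u]]])
  then show ?thesis by (simp add: GR_def gr_class_eq)
qed

context
  fixes \<chi> :: "(nat \<Rightarrow> ('k, 'a) tm) set \<Rightarrow> 'k"
  assumes \<chi>: "rb_character (GR A) \<chi>"
begin

lemma character_pls_class:
  "f \<in> gr_reps A \<Longrightarrow> g \<in> gr_reps A \<Longrightarrow>
   \<chi> (pls (GR A) (gr_class f) (gr_class g)) = \<chi> (gr_class f) + \<chi> (gr_class g)"
  using \<chi> gr_class_in_GR unfolding rb_character_def by blast

lemma character_mul_class:
  "f \<in> gr_reps A \<Longrightarrow> g \<in> gr_reps A \<Longrightarrow>
   \<chi> (mul (GR A) (gr_class f) (gr_class g)) = \<chi> (gr_class f) * \<chi> (gr_class g)"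
  using \<chi> gr_class_in_GR unfolding rb_character_def by blast

lemma character_scl_class: "f \<in> gr_reps A \<Longrightarrow> \<chi> (scl (GR A) c (gr_class f)) = c * \<chi> (gr_class f)"
  using \<chi> gr_class_in_GR unfolding rb_character_def by blast

lemma character_rbo_class: "f \<in> gr_reps A \<Longrightarrow> \<chi> (rbo (GR A) (gr_class f)) = 0"
  using \<chi> gr_class_in_GR unfolding rb_character_def by blast

text \<open>A family lying in U_(m-1) in every degree m represents zero, which is R(0).\<close>

lemma character_vanishes_below:
  assumes h: "h \<in> gr_reps A" and below: "\<And>m. filtered_below m (h m)"
  shows "\<chi> (gr_class h) = 0"
proof -
  have zero: "(\<lambda>m. Z) \<in> gr_reps A" by (simp add: gr_reps_iff filtered_Z filtered_below_Z)
  have "rbo (GR A) (gr_class (\<lambda>m. Z)) = gr_class h"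
    by (rule rbo_GR_class[OF zero h]) (simp add: cong_below_if_cong_Z[OF cong_Rt_Z below])
  then show ?thesis using character_rbo_class[OF zero] by simp
qed

lemma character_homog_deg:
  assumes sq: "\<And>x. Mu (G x) (G x) \<approx> Z" and "deg t \<le> n"
  shows "\<chi> (gr_class (homog n t)) = 0"
  using assms(2)
proof (induction t arbitrary: n)
  case (G x)
  have reps: "homog n (G x) \<in> gr_reps A" by (rule homog_in_gr_reps[OF filtered_deg[OF G]])
  show ?case
  proof (cases "n = 1")
    case True
    have x: "filtered 1 (G x)" by (rule filtered_deg) simp
    have "\<chi> (gr_class (homog 1 (G x))) * \<chi> (gr_class (homog 1 (G x)))
            = \<chi> (gr_class (homog (1 + 1) (Mu (G x) (G x))))"
      using character_mul_class[OF reps reps] mul_GR_homog[OF x x] True by simp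
    also have "\<dots> = 0"
      by (rule character_vanishes_below[OF homog_in_gr_reps[OF filtered_Mu[OF x x]]])
        (auto simp: homog_def filtered_below_Z intro!: filtered_below_if_cong_Z sq)
    finally show ?thesis using True by simp
  next
    case False
    then have "filtered_below n (G x)" using G by (simp add: filtered_below_def filtered_deg)
    then show ?thesis by (intro character_vanishes_below reps) (simp add: homog_def filtered_below_Z)
  qed
next
  case Z
  show ?case
    by (rule character_vanishes_below[OF homog_in_gr_reps[OF filtered_Z]])
      (auto simp: homog_def filtered_below_Z)
next
  case (Pl s u)
  have s: "homog n s \<in> gr_reps A" and u: "homog n u \<in> gr_reps A"
    and su: "homog n (Pl s u) \<in> gr_reps A"
    using Pl.prems by (auto intro!: homog_in_gr_reps filtered_deg)
  have "pls (GR A) (gr_class (homog n s)) (gr_class (homog n u)) = gr_class (homog n (Pl s u))"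
    by (rule pls_GR_class[OF s u su])
      (auto simp: homog_def cong_below_refl intro: cong_below_if_cong cong_pl_zero)
  then show ?case using character_pls_class[OF s u] Pl by simp
next
  case (Sc c s)
  have s: "homog n s \<in> gr_reps A" and cs: "homog n (Sc c s) \<in> gr_reps A"
    using Sc.prems by (auto intro!: homog_in_gr_reps filtered_deg)
  have "scl (GR A) c (gr_class (homog n s)) = gr_class (homog n (Sc c s))"
    by (rule scl_GR_class[OF s cs])
      (auto simp: homog_def cong_below_refl intro: cong_below_if_cong cong_Sc_Z)
  then have "\<chi> (gr_class (homog n (Sc c s))) = c * \<chi> (gr_class (homog n s))"
    using character_scl_class[OF s, of c] by metis
  then show ?case using Sc by simp
next
  case (Mu s u)
  define i where "i = deg s"
  have s: "filtered i s" and u: "filtered (n - i) u"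
    using Mu.prems by (auto simp: i_def intro!: filtered_deg)
  have "mul (GR A) (gr_class (homog i s)) (gr_class (homog (n - i) u)) = gr_class (homog n (Mu s u))"
    using mul_GR_homog[OF s u] Mu.prems by (simp add: i_def)
  moreover have "\<chi> (gr_class (homog i s)) = 0" using Mu.IH(1)[of i] by (simp add: i_def)
  ultimately show ?case
    using character_mul_class[OF homog_in_gr_reps[OF s] homog_in_gr_reps[OF u]] by simp
next
  case (Rt s)
  have s: "homog n s \<in> gr_reps A" and rs: "homog n (Rt s) \<in> gr_reps A"
    using Rt.prems by (auto intro!: homog_in_gr_reps filtered_deg)
  have "rbo (GR A) (gr_class (homog n s)) = gr_class (homog n (Rt s))"
    by (rule rbo_GR_class[OF s rs])
      (auto simp: homog_def cong_below_refl intro: cong_below_if_cong cong_Rt_Z)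
  then show ?case using character_rbo_class[OF s] by simp
qed

lemma character_homog:
  assumes sq: "\<And>x. Mu (G x) (G x) \<approx> Z" and t: "filtered n t"
  shows "\<chi> (gr_class (homog n t)) = 0"
proof -
  obtain t' where t': "t \<approx> t'" "deg t' \<le> n" using t unfolding filtered_def by blast
  have "(homog n t, homog n t') \<in> gr_rel A"
    by (rule gr_relI[OF homog_in_gr_reps[OF filtered_deg[OF t'(2)]]])
      (auto simp: homog_def cong_below_refl cong_below_if_cong t')
  then show ?thesis using character_homog_deg[OF sq t'(2)] by (simp add: gr_class_eq)
qed

lemma character_vanishes_from:
  assumes sq: "\<And>x. Mu (G x) (G x) \<approx> Z"
  shows "f \<in> gr_reps A \<Longrightarrow> \<forall>m\<ge>N. filtered_below m (f m) \<Longrightarrow> \<chi> (gr_class f) = 0"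
proof (induction N arbitrary: f)
  case 0
  then show ?case using character_vanishes_below by blast
next
  case (Suc N)
  define f' where "f' = f(N := Z)"
  have fN: "filtered N (f N)" using Suc.prems(1) by (simp add: gr_reps_iff)
  have "{n. \<not> filtered_below n (f' n)} \<subseteq> {n. \<not> filtered_below n (f n)}"
    by (auto simp: f'_def filtered_below_Z)
  then have "finite {n. \<not> filtered_below n (f' n)}"
    using Suc.prems(1) finite_subset by (auto simp: gr_reps_iff)
  then have f': "f' \<in> gr_reps A"
    using Suc.prems(1) by (simp add: gr_reps_iff f'_def filtered_Z)
  have "\<forall>m\<ge>N. filtered_below m (f' m)"
    using Suc.prems(2) by (auto simp: f'_def filtered_below_Z Suc_le_eq)
  then have "\<chi> (gr_class f') = 0" using Suc.IH f' by blast
  moreover have "pls (GR A) (gr_class (homog N (f N))) (gr_class f') = gr_class f"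
    by (rule pls_GR_class[OF homog_in_gr_reps[OF fN] f' Suc.prems(1)])
      (auto simp: homog_def f'_def intro: cong_below_if_cong cong_pl_zero cong_pl_zero_right)
  ultimately show ?case
    using character_pls_class[OF homog_in_gr_reps[OF fN] f'] character_homog[OF sq fN] by simp
qed

lemma character_GR_vanishes:
  assumes sq: "\<And>x. Mu (G x) (G x) \<approx> Z" and X: "X \<in> carr (GR A)"
  shows "\<chi> X = 0"
proof -
  obtain f where f: "f \<in> gr_reps A" and X_eq: "X = gr_class f"
    using X by (auto simp: GR_def elim: quotientE)
  then have "finite {n. \<not> filtered_below n (f n)}" by (simp add: gr_reps_iff)
  then obtain N where "\<forall>n\<in>{n. \<not> filtered_below n (f n)}. n < N"
    by (auto simp: finite_nat_set_iff_bounded)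
  then have "\<forall>m\<ge>N. filtered_below m (f m)" by force
  then show ?thesis using character_vanishes_from[OF sq f] X_eq by simp
qed

end

end

fun tm_eval :: "('a \<Rightarrow> 'k::field) \<Rightarrow> ('k, 'a) tm \<Rightarrow> 'k" where
  "tm_eval f (G x) = f x"
| "tm_eval f Z = 0"
| "tm_eval f (Pl s t) = tm_eval f s + tm_eval f t"
| "tm_eval f (Sc c t) = c * tm_eval f t"
| "tm_eval f (Mu s t) = tm_eval f s * tm_eval f t"
| "tm_eval f (Rt t) = 0"

lemma tm_eval_rbc_Ab:
  assumes "\<forall>x\<in>carr A. \<forall>y\<in>carr A. f (pls A x y) = f x + f y"
    and "\<forall>c. \<forall>x\<in>carr A. f (scl A c x) = c * f x"
    and "f (zer A) = 0"
  shows "(s, t) \<in> rbc (Ab A) \<Longrightarrow> tm_eval f s = tm_eval f t"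
  by (induction rule: rbc.induct) (simp_all add: Ab_def assms algebra_simps)

lemma rb_character_UE_Ab:
  assumes carr: "carr A = UNIV"
    and pls: "\<forall>x\<in>carr A. \<forall>y\<in>carr A. f (pls A x y) = f x + f y"
    and scl: "\<forall>c. \<forall>x\<in>carr A. f (scl A c x) = c * f x"
    and zer: "f (zer A) = 0"
  shows "rb_character (UE (Ab A)) (\<lambda>X. tm_eval f (rep X))"
    and "\<And>t. tm_eval f (rep (rbc (Ab A) `` {t})) = tm_eval f t"
proof -
  interpret full_carrier "Ab A" using carr by unfold_locales (simp add: Ab_def)
  show eval_class: "tm_eval f (rep (rbc (Ab A) `` {t})) = tm_eval f t" for t
  proof -
    have "t \<in> rbc (Ab A) `` {t}" by (simp add: rbc.refl)
    then have "rep (rbc (Ab A) `` {t}) \<in> rbc (Ab A) `` {t}"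
      unfolding rep_def by (rule someI[of "\<lambda>x. x \<in> rbc (Ab A) `` {t}"])
    then show ?thesis using tm_eval_rbc_Ab[OF pls scl zer] by simp
  qed
  show "rb_character (UE (Ab A)) (\<lambda>X. tm_eval f (rep X))"
    by (simp add: rb_character_def UE_def eval_class)
qed

definition seq_prealg :: "('k::field, nat \<Rightarrow> 'k) prealg" where
  "seq_prealg = \<lparr>carr = UNIV, zer = (\<lambda>n. 0), pls = (\<lambda>x y n. x n + y n), scl = (\<lambda>c x n. c * x n),
                 succ_op = (\<lambda>x y n. x n * y n), prec_op = (\<lambda>x y n. 0)\<rparr>"

lemma is_preas_seq_prealg: "is_preas seq_prealg"
  unfolding is_preas_def vspace_def bilinear_on_def
  by (auto simp: seq_prealg_def fun_eq_iff algebra_simps intro: exI[of _ "\<lambda>n. - x n" for x])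

interpretation seq: full_carrier seq_prealg
  by unfold_locales (simp add: seq_prealg_def)

lemma seq_prealg_Mu_G_G: "seq.tm_cong (Mu (G x) (G y)) Z"
  by (rule seq.cong_Mu_G_G_Z[where u = "\<lambda>n. 1"]) (simp_all add: seq_prealg_def)

theorem corollary1:
  shows "\<not> PBW_RBAs_preAs TYPE(('k::field, nat \<Rightarrow> 'k) prealg)"
proof
  let ?A = "seq_prealg :: ('k, nat \<Rightarrow> 'k) prealg" and ?\<chi> = "\<lambda>X. tm_eval (\<lambda>x. x 0) (rep X)"
  assume "PBW_RBAs_preAs TYPE(('k, nat \<Rightarrow> 'k) prealg)"
  then have iso: "rb_iso (GR ?A) (UE (Ab ?A))"
    using is_preas_seq_prealg unfolding PBW_RBAs_preAs_def by blast
  have ev0: "rb_character (UE (Ab ?A)) ?\<chi>"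
    and ev0_class: "\<And>t. ?\<chi> (rbc (Ab ?A) `` {t}) = tm_eval (\<lambda>x. x 0) t"
    by (rule rb_character_UE_Ab; simp add: seq_prealg_def)+
  obtain \<phi> where surj: "\<phi> ` carr (GR ?A) = carr (UE (Ab ?A))"
    and char: "rb_character (GR ?A) (?\<chi> \<circ> \<phi>)"
    using rb_iso_character[OF iso ev0] by blast
  have "G (\<lambda>n. 1) \<in> terms (Ab ?A)"
    by (rule terms.intros(1)) (simp add: Ab_def seq_prealg_def)
  then have "rbc (Ab ?A) `` {G (\<lambda>n. 1)} \<in> carr (UE (Ab ?A))"
    by (simp add: UE_def quotientI)
  then obtain Y where Y: "Y \<in> carr (GR ?A)" and "\<phi> Y = rbc (Ab ?A) `` {G (\<lambda>n. 1)}"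
    unfolding surj[symmetric] by blast
  then have "(?\<chi> \<circ> \<phi>) Y = 1" by (simp add: ev0_class)
  moreover have "(?\<chi> \<circ> \<phi>) Y = 0"
    by (rule seq.character_GR_vanishes[OF char seq_prealg_Mu_G_G Y])
  ultimately show False by simp
qed

end
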